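(* Let $I\subset[0,\infty)$ be an interval, let $a,b\in I^\circ$ with $a<b$, and let $f:I\to\mathbb{R}$ be twice differentiable on $I^\circ$ with $f''\in L^1([a,b])$. Let $q>1$, $p=\frac{q}{q-1}$, assume $h(\frac12)>0$ and that $|f''|^q$ is $h$-concave on $[a,b]$. Then $$\left|\frac{1}{b-a}\int_a^b f(x)\,dx-f\Big(\frac{a+b}{2}\Big)\right|\le \frac{(b-a)^2}{4}\Big(\frac{1}{2p+1}\Big)^{1/p}\Big(\frac{1}{2h(\frac12)}\Big)^{1/q}\Big|f''\Big(\frac{a+b}{2}\Big)\Big|.$$
   Context: Let $J$ be an interval with $(0,1)\subseteq J$ and $h:J\to\mathbb{R}$ a non-negative function, not identically zero. A non-negative function $g$ defined on an interval $K$ is called $h$-concave on $K$ if for all $x,y\in K$ and all $t\in(0,1)$: $g(tx+(1-t)y)\ge h(t)g(x)+h(1-t)g(y)$. $I^\circ$ denotes the interior of $I$. *)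

theory Defs
  imports "HOL-Analysis.Analysis"
begin

definition admissible_h :: "real set \<Rightarrow> (real \<Rightarrow> real) \<Rightarrow> bool" where
  "admissible_h J h \<longleftrightarrow> is_interval J \<and> {0<..<1} \<subseteq> J \<and>
     (\<forall>t\<in>J. 0 \<le> h t) \<and> (\<exists>t\<in>J. h t \<noteq> 0)"

definition h_concave_on :: "(real \<Rightarrow> real) \<Rightarrow> real set \<Rightarrow> (real \<Rightarrow> real) \<Rightarrow> bool" where
  "h_concave_on h K g \<longleftrightarrow> (\<forall>x\<in>K. 0 \<le> g x) \<and>
     (\<forall>x\<in>K. \<forall>y\<in>K. \<forall>t\<in>{0<..<1}.
        g (t * x + (1 - t) * y) \<ge> h t * g x + h (1 - t) * g y)"

end

theory Submission
  imports Defs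
begin

text \<open>Applying h-concavity of \<open>|f''|\<^sup>q\<close> at \<open>t = 1/2\<close> to the points \<open>x\<close> and \<open>a + b - x\<close>, whose
  midpoint is \<open>m = (a + b)/2\<close>, gives \<open>|f''(x)|\<^sup>q \<le> |f''(m)|\<^sup>q / h(1/2)\<close> on \<open>[a, b]\<close>.
  With this uniform bound \<open>M\<close> on \<open>|f''|\<close>, Taylor's formula around \<open>m\<close> and integration of the
  remainder give the classical midpoint estimate \<open>M (b - a)\<^sup>2 / 24\<close>. Since
  \<open>(1/(2p+1))\<^bsup>1/p\<^esup> \<ge> 1/3\<close> and \<open>(1/2)\<^bsup>1/q\<^esup> \<ge> 1/2\<close>, this is below the claimed bound.\<close>

lemma h_concave_on_le_midpoint:
  assumes conc: "h_concave_on h {a..b} g" and h_half: "h (1/2) > 0"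
    and x: "x \<in> {a..b}"
  shows "g x \<le> g ((a + b) / 2) / h (1/2)"
proof -
  have x': "a + b - x \<in> {a..b}" using x by auto
  have "\<forall>t\<in>{0<..<1}. h t * g x + h (1 - t) * g (a + b - x) \<le> g (t * x + (1 - t) * (a + b - x))"
    using conc x x' unfolding h_concave_on_def by blast
  then have "h (1/2) * g x + h (1 - 1/2) * g (a + b - x) \<le> g (1/2 * x + (1 - 1/2) * (a + b - x))"
    by (rule bspec) simp
  also have "1/2 * x + (1 - 1/2) * (a + b - x) = (a + b) / 2" by (simp add: field_simps)
  finally have "h (1/2) * g x \<le> g ((a + b) / 2) - h (1/2) * g (a + b - x)" by simp
  also have "\<dots> \<le> g ((a + b) / 2)"
    using conc x' h_half unfolding h_concave_on_def by simp
  finally show ?thesis using h_half by (simp add: field_simps)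
qed

lemma abs_le_of_h_concave_on_abs_powr:
  assumes conc: "h_concave_on h {a..b} (\<lambda>x. \<bar>g x\<bar> powr q)" and h_half: "h (1/2) > 0"
    and q: "q > 0" and x: "x \<in> {a..b}"
  shows "\<bar>g x\<bar> \<le> \<bar>g ((a + b) / 2)\<bar> * (1 / h (1/2)) powr (1 / q)"
proof -
  have "\<bar>g x\<bar> = (\<bar>g x\<bar> powr q) powr (1/q)" using q by (simp add: powr_powr)
  also have "\<dots> \<le> (\<bar>g ((a + b) / 2)\<bar> powr q / h (1/2)) powr (1/q)"
    using h_concave_on_le_midpoint[OF conc h_half x] q by (intro powr_mono2) auto
  also have "\<dots> = \<bar>g ((a + b) / 2)\<bar> * (1 / h (1/2)) powr (1/q)"
    using q h_half by (simp add: powr_divide powr_powr)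
  finally show ?thesis .
qed

lemma taylor_first_order_error_le:
  fixes f f' f'' :: "real \<Rightarrow> real"
  assumes f': "\<And>t. t \<in> {a..b} \<Longrightarrow> (f has_real_derivative f' t) (at t)"
    and f'': "\<And>t. t \<in> {a..b} \<Longrightarrow> (f' has_real_derivative f'' t) (at t)"
    and bound: "\<And>t. t \<in> {a..b} \<Longrightarrow> \<bar>f'' t\<bar> \<le> M"
    and c: "c \<in> {a..b}" and x: "x \<in> {a..b}"
  shows "\<bar>f x - (f c + f' c * (x - c))\<bar> \<le> M / 2 * (x - c)^2"
proof (cases "x = c")
  case False
  define diff where "diff = (\<lambda>n::nat. if n = 0 then f else if n = 1 then f' else f'')"
  have "\<exists>t. (if x < c then x < t \<and> t < c else c < t \<and> t < x) \<and>
      f x = (\<Sum>n<2. diff n c / fact n * (x - c)^n) + diff 2 t / fact 2 * (x - c)^2"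
  proof (rule Taylor[of 2 diff f a b])
    show "\<forall>n t. n < 2 \<and> a \<le> t \<and> t \<le> b \<longrightarrow> DERIV (diff n) t :> diff (Suc n) t"
      using f' f'' by (auto simp: diff_def less_2_cases_iff)
  qed (use x c False in \<open>simp_all add: diff_def\<close>)
  then obtain t where t: "if x < c then x < t \<and> t < c else c < t \<and> t < x"
    and taylor: "f x = (\<Sum>n<2. diff n c / fact n * (x - c)^n) + diff 2 t / fact 2 * (x - c)^2"
    by blast
  have "t \<in> {a..b}" using t x c by (auto split: if_splits)
  have "\<bar>f x - (f c + f' c * (x - c))\<bar> = \<bar>f'' t\<bar> / 2 * (x - c)^2"
    using taylor by (simp add: diff_def numeral_2_eq_2 lessThan_Suc abs_mult)
  also have "\<dots> \<le> M / 2 * (x - c)^2"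
    using bound[OF \<open>t \<in> {a..b}\<close>] by (intro mult_right_mono) auto
  finally show ?thesis .
qed simp

lemma midpoint_rule_error_le:
  fixes f f' f'' :: "real \<Rightarrow> real"
  assumes ab: "a < b"
    and f': "\<And>t. t \<in> {a..b} \<Longrightarrow> (f has_real_derivative f' t) (at t)"
    and f'': "\<And>t. t \<in> {a..b} \<Longrightarrow> (f' has_real_derivative f'' t) (at t)"
    and bound: "\<And>t. t \<in> {a..b} \<Longrightarrow> \<bar>f'' t\<bar> \<le> M"
  shows "\<bar>integral {a..b} f / (b - a) - f ((a + b) / 2)\<bar> \<le> M * (b - a)^2 / 24"
proof -
  define m where "m = (a + b) / 2"
  have m: "m \<in> {a..b}" using ab by (simp add: m_def)
  have "continuous_on {a..b} f"
    using f' by (meson DERIV_isCont continuous_at_imp_continuous_on)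
  then have "(f has_integral integral {a..b} f) {a..b}"
    by (simp add: integrable_continuous_interval integrable_integral)
  moreover have "((\<lambda>x. f m + f' m * (x - m)) has_integral (b - a) * f m) {a..b}"
  proof -
    have "((\<lambda>x. f m + f' m * (x - m)) has_integral
          (f m * b + f' m * (b - m)^2 / 2) - (f m * a + f' m * (a - m)^2 / 2)) {a..b}"
      using ab by (intro fundamental_theorem_of_calculus)
        (auto simp flip: has_real_derivative_iff_has_vector_derivative
              intro!: derivative_eq_intros simp: field_simps)
    also have "(f m * b + f' m * (b - m)^2 / 2) - (f m * a + f' m * (a - m)^2 / 2) = (b - a) * f m"
      by (simp add: m_def field_simps power2_eq_square)
    finally show ?thesis .
  qed
  ultimately have remainder: "((\<lambda>x. f x - (f m + f' m * (x - m)))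
      has_integral integral {a..b} f - (b - a) * f m) {a..b}"
    by (rule has_integral_diff)
  have quadratic: "((\<lambda>x. M / 2 * (x - m)^2) has_integral M * (b - a)^3 / 24) {a..b}"
  proof -
    have "((\<lambda>x. M / 2 * (x - m)^2) has_integral M / 6 * (b - m)^3 - M / 6 * (a - m)^3) {a..b}"
      using ab by (intro fundamental_theorem_of_calculus)
        (auto simp flip: has_real_derivative_iff_has_vector_derivative
              intro!: derivative_eq_intros simp: algebra_simps)
    also have "M / 6 * (b - m)^3 - M / 6 * (a - m)^3 = M * (b - a)^3 / 24"
      by (simp add: m_def field_simps power3_eq_cube)
    finally show ?thesis .
  qed
  have "norm (integral {a..b} (\<lambda>x. f x - (f m + f' m * (x - m))))
          \<le> integral {a..b} (\<lambda>x. M / 2 * (x - m)^2)"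
    using taylor_first_order_error_le[OF f' f'' bound m] remainder quadratic
    by (intro integral_norm_bound_integral) (auto simp: has_integral_integrable)
  then have "\<bar>integral {a..b} f - (b - a) * f m\<bar> \<le> M * (b - a)^3 / 24"
    by (simp only: integral_unique[OF remainder] integral_unique[OF quadratic] real_norm_def)
  then have "\<bar>integral {a..b} f - (b - a) * f m\<bar> / (b - a) \<le> M * (b - a)^2 / 24"
    using ab by (simp add: divide_le_eq power3_eq_cube power2_eq_square mult_ac)
  moreover have "integral {a..b} f / (b - a) - f m = (integral {a..b} f - (b - a) * f m) / (b - a)"
    using ab by (simp add: field_simps)
  ultimately show ?thesis using ab by (simp add: m_def abs_divide)
qed

lemma one_third_le_powr:
  fixes p :: real
  assumes p: "p \<ge> 1"
  shows "1/3 \<le> (1 / (2 * p + 1)) powr (1 / p)"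
proof -
  have "1 \<le> ln (3::real)" using exp_le ln_ge_iff by auto
  have "ln (2 * p + 1) \<le> ln (3 * p)" using p by simp
  also have "\<dots> = ln 3 + ln p" using p by (simp add: ln_mult)
  also have "\<dots> \<le> ln 3 + (p - 1)" using ln_le_minus_one[of p] p by simp
  also have "\<dots> \<le> ln 3 + (p - 1) * ln 3"
    using mult_left_mono[OF \<open>1 \<le> ln 3\<close>, of "p - 1"] p by simp
  also have "\<dots> = p * ln 3" by (simp add: algebra_simps)
  finally have "ln ((2 * p + 1) powr (1 / p)) \<le> ln 3" using p by (simp add: ln_powr field_simps)
  then have "(2 * p + 1) powr (1 / p) \<le> 3" using p by (subst (asm) ln_le_cancel_iff) auto
  then show ?thesis using p by (simp add: powr_divide field_simps)
qed

lemma half_le_half_powr: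
  fixes q :: real
  assumes "q \<ge> 1"
  shows "1/2 \<le> (1/2) powr (1 / q)"
  using powr_mono'[of "1/q" 1 "1/2"] assms by simp

theorem theorem13:
  fixes J I :: "real set" and h f f' f'' :: "real \<Rightarrow> real" and a b q p :: real
  assumes hJ: "admissible_h J h"
    and I: "is_interval I" "I \<subseteq> {0..}"
    and ab: "a \<in> interior I" "b \<in> interior I" "a < b"
    and f': "\<And>x. x \<in> interior I \<Longrightarrow> (f has_real_derivative f' x) (at x)"
    and f'': "\<And>x. x \<in> interior I \<Longrightarrow> (f' has_real_derivative f'' x) (at x)"
    and L1: "set_integrable lborel {a..b} f''"
    and q: "q > 1" and p: "p = q / (q - 1)"
    and h_half: "h (1/2) > 0"
    and conc: "h_concave_on h {a..b} (\<lambda>x. \<bar>f'' x\<bar> powr q)"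
  shows "\<bar>integral {a..b} f / (b - a) - f ((a + b) / 2)\<bar>
           \<le> (b - a)^2 / 4 * (1 / (2 * p + 1)) powr (1 / p)
              * (1 / (2 * h (1/2))) powr (1 / q) * \<bar>f'' ((a + b) / 2)\<bar>"
proof -
  define M where "M = \<bar>f'' ((a + b) / 2)\<bar> * (1 / h (1/2)) powr (1 / q)"
  have "is_interval (interior I)" using I(1) by (simp add: is_interval_convex_1 convex_interior)
  then have ab_int: "x \<in> interior I" if "x \<in> {a..b}" for x
    using ab that unfolding is_interval_1 by (metis atLeastAtMost_iff)
  have "\<bar>f'' x\<bar> \<le> M" if "x \<in> {a..b}" for x
    unfolding M_def using q that by (intro abs_le_of_h_concave_on_abs_powr[OF conc h_half]) auto
  with f' f'' ab_int
  have "\<bar>integral {a..b} f / (b - a) - f ((a + b) / 2)\<bar> \<le> M * (b - a)^2 / 24"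
    by (intro midpoint_rule_error_le[OF ab(3)]) auto
  also have "\<dots> = (b - a)^2 / 4 * (1/3 * (1/2)) * M" by simp
  also have "\<dots> \<le> (b - a)^2 / 4 * ((1 / (2 * p + 1)) powr (1 / p) * (1/2) powr (1 / q)) * M"
  proof -
    have "p \<ge> 1" using q by (simp add: p)
    then have "1/3 * (1/2) \<le> (1 / (2 * p + 1)) powr (1 / p) * (1/2) powr (1 / q)"
      using one_third_le_powr half_le_half_powr q by (intro mult_mono) auto
    moreover have "M \<ge> 0" by (simp add: M_def)
    ultimately show ?thesis by (intro mult_right_mono mult_left_mono) auto
  qed
  also have "\<dots> = (b - a)^2 / 4 * (1 / (2 * p + 1)) powr (1 / p)
                  * ((1/2) powr (1 / q) * (1 / h (1/2)) powr (1 / q)) * \<bar>f'' ((a + b) / 2)\<bar>"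
    by (simp only: M_def mult_ac)
  also have "(1/2) powr (1 / q) * (1 / h (1/2)) powr (1 / q) = (1 / (2 * h (1/2))) powr (1 / q)"
    using h_half by (simp add: powr_mult[symmetric])
  finally show ?thesis .
qed

end
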